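(* Let $\Gamma$ be a finite metric tree and let $f\colon\Gamma\to[0,\infty)$ be a continuous edge-linear function. If $f=\sum_\alpha f_\alpha$ is a unimodal decomposition of $f$, then there is a unimodal decomposition $f=\sum_\alpha g_\alpha$ with the same number of components in which every component $g_\alpha$ is edge-linear.
   Context: A finite metric tree $\Gamma$ is a compact contractible 1-dimensional metric space stratified into finitely many vertices and open edges. A function is edge-linear if its restriction to each edge is affine with respect to the edge's metric. A continuous function $u\colon\Gamma\to[0,\infty)$ with maximal value $M$ is unimodal if its upper excursion sets $u^{-1}([c,\infty))$ are contractible for all $0<c\le M$ (and empty for $c>M$). A unimodal decomposition of $f$ is a finite family of unimodal functions whose pointwise sum is $f$. *)

theory Defs
  imports "HOL-Analysis.Analysis"
begin

definition metric_tree :: "'a::euclidean_space set \<Rightarrow> 'a set \<Rightarrow> ('a \<times> 'a) set \<Rightarrow> bool" where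
  "metric_tree \<Gamma> V E \<longleftrightarrow>
     finite V \<and> V \<noteq> {} \<and> E \<subseteq> V \<times> V \<and> (\<forall>(a,b)\<in>E. a \<noteq> b) \<and>
     \<Gamma> = V \<union> (\<Union>(a,b)\<in>E. closed_segment a b) \<and>
     (\<forall>(a,b)\<in>E. open_segment a b \<inter> V = {}) \<and>
     (\<forall>e\<in>E. \<forall>e'\<in>E. e \<noteq> e' \<longrightarrow>
        open_segment (fst e) (snd e) \<inter> closed_segment (fst e') (snd e') = {}) \<and>
     contractible \<Gamma>"

definition edge_linear :: "('a::euclidean_space \<times> 'a) set \<Rightarrow> ('a \<Rightarrow> real) \<Rightarrow> bool" where
  "edge_linear E u \<longleftrightarrow>
     (\<forall>(a,b)\<in>E. \<forall>t\<in>{0..1}. u ((1 - t) *\<^sub>R a + t *\<^sub>R b) = (1 - t) * u a + t * u b)"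

definition unimodal :: "'a::euclidean_space set \<Rightarrow> ('a \<Rightarrow> real) \<Rightarrow> bool" where
  "unimodal \<Gamma> u \<longleftrightarrow>
     continuous_on \<Gamma> u \<and> (\<forall>x\<in>\<Gamma>. 0 \<le> u x) \<and>
     (\<exists>M. (\<exists>x\<in>\<Gamma>. u x = M) \<and> (\<forall>x\<in>\<Gamma>. u x \<le> M) \<and>
          (\<forall>c. 0 < c \<and> c \<le> M \<longrightarrow> contractible {x\<in>\<Gamma>. c \<le> u x}) \<and>
          (\<forall>c. M < c \<longrightarrow> {x\<in>\<Gamma>. c \<le> u x} = {}))"

end

(* Replace every component by the edge-linear interpolant of its values at the vertices; as f
   is edge-linear, the interpolants still sum to f.  For a level c, the superlevel set of the
   interpolant of u is the subgraph spanned by the vertices where u >= c, with one segment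
   hanging off each edge leaving that subgraph.  Collapsing every leaving edge onto its endpoint
   inside retracts the (contractible) superlevel set of u onto the subgraph, because an edge with
   both endpoints in a closed connected subset of \<Gamma> lies in it: \<Gamma> has no cycles, since
   by contractibility the map winding once around the circle along a single edge has a continuous
   logarithm.  So the subgraph is contractible, and attaching segments at single points keeps it
   an absolute retract. *)
theory Submission
  imports Defs
begin

definition seg_coord :: "'a::real_inner \<Rightarrow> 'a \<Rightarrow> 'a \<Rightarrow> real" where
  "seg_coord a b x = inner (x - a) (b - a) / inner (b - a) (b - a)"

lemma seg_coord_combination:
  assumes "a \<noteq> b" shows "seg_coord a b ((1 - t) *\<^sub>R a + t *\<^sub>R b) = t"
proof -
  have "(1 - t) *\<^sub>R a + t *\<^sub>R b - a = t *\<^sub>R (b - a)" by (simp add: algebra_simps)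
  then show ?thesis using assms by (simp add: seg_coord_def)
qed

lemma seg_coord_left [simp]: "seg_coord a b a = 0"
  by (simp add: seg_coord_def)

lemma seg_coord_right: "a \<noteq> b \<Longrightarrow> seg_coord a b b = 1"
  by (simp add: seg_coord_def)

lemma continuous_on_seg_coord [continuous_intros]:
  "continuous_on S f \<Longrightarrow> continuous_on S (\<lambda>x. seg_coord a b (f x))"
  unfolding seg_coord_def divide_inverse by (intro continuous_intros)

lemma closed_segment_seg_coord:
  assumes "a \<noteq> b" "x \<in> closed_segment a b"
  shows "x = (1 - seg_coord a b x) *\<^sub>R a + seg_coord a b x *\<^sub>R b"
    and "0 \<le> seg_coord a b x" and "seg_coord a b x \<le> 1"
proof -
  obtain t where "0 \<le> t" "t \<le> 1" "x = (1 - t) *\<^sub>R a + t *\<^sub>R b"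
    using assms(2) by (auto simp: in_segment)
  moreover have "seg_coord a b x = t"
    using calculation(3) seg_coord_combination[OF assms(1)] by simp
  ultimately show "x = (1 - seg_coord a b x) *\<^sub>R a + seg_coord a b x *\<^sub>R b"
    "0 \<le> seg_coord a b x" "seg_coord a b x \<le> 1" by auto
qed

lemma inj_on_seg_coord:
  assumes "a \<noteq> b" shows "inj_on (seg_coord a b) (closed_segment a b)"
proof (rule inj_onI)
  fix x y assume x: "x \<in> closed_segment a b" and y: "y \<in> closed_segment a b"
    and eq: "seg_coord a b x = seg_coord a b y"
  have "x = (1 - seg_coord a b x) *\<^sub>R a + seg_coord a b x *\<^sub>R b"
    by (rule closed_segment_seg_coord(1)[OF assms x])
  also have "\<dots> = y"
    unfolding eq by (rule closed_segment_seg_coord(1)[OF assms y, symmetric])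
  finally show "x = y" .
qed

lemma convex_seg_coord_superlevel:
  "convex {x. c \<le> (1 - seg_coord a b x) * A + seg_coord a b x * B}"
proof -
  define d where "d = b - a"
  have eq: "{x. c \<le> (1 - seg_coord a b x) * A + seg_coord a b x * B}
      = {x. inner (((B - A) / inner d d) *\<^sub>R d) x \<ge> c - A + (B - A) * inner a d / inner d d}"
    by (auto simp: seg_coord_def d_def[symmetric] inner_diff_left inner_commute
        algebra_simps diff_divide_distrib)
  show ?thesis unfolding eq by (rule convex_halfspace_ge)
qed

lemma continuous_log_unique_up_to_constant:
  fixes L1 L2 :: "'a::topological_space \<Rightarrow> complex"
  assumes "connected S" "continuous_on S L1" "continuous_on S L2"
    and exp_eq: "\<forall>x\<in>S. exp (L1 x) = exp (L2 x)" and "x \<in> S" "y \<in> S"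
  shows "L1 y - L1 x = L2 y - L2 x"
proof -
  have "(\<lambda>x. L1 x - L2 x) constant_on S"
  proof (rule continuous_discrete_range_constant)
    show "continuous_on S (\<lambda>x. L1 x - L2 x)" using assms(2,3) by (intro continuous_intros)
    fix x assume x: "x \<in> S"
    show "\<exists>e>0. \<forall>y. y \<in> S \<and> L1 y - L2 y \<noteq> L1 x - L2 x \<longrightarrow> e \<le> norm (L1 y - L2 y - (L1 x - L2 x))"
    proof (intro exI[of _ "2 * pi"] conjI allI impI)
      fix y assume y: "y \<in> S \<and> L1 y - L2 y \<noteq> L1 x - L2 x"
      have "exp (L1 y - L2 y) = exp (L1 x - L2 x)"
        using exp_eq x y by (simp add: exp_diff)
      then show "2 * pi \<le> norm (L1 y - L2 y - (L1 x - L2 x))"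
        using y exp_complex_eqI abs_Im_le_cmod[of "L1 y - L2 y - (L1 x - L2 x)"] by force
    qed simp
  qed fact
  then have "L1 y - L2 y = L1 x - L2 x"
    using assms(5,6) by (auto simp: constant_on_def)
  then show ?thesis by algebra
qed

lemma AR_Un_convex_attached:
  fixes K :: "'a::euclidean_space set"
  assumes "finite F" "AR K" "closed K" "\<forall>P\<in>F. convex P \<and> closed P"
    "\<forall>P\<in>F. \<exists>a\<in>K. a \<in> P \<and> P \<inter> (K \<union> \<Union>(F - {P})) \<subseteq> {a}"
  shows "AR (K \<union> \<Union>F)"
  using assms
proof (induction F rule: finite_induct)
  case (insert P F)
  have "\<forall>Q\<in>F. \<exists>a\<in>K. a \<in> Q \<and> Q \<inter> (K \<union> \<Union>(F - {Q})) \<subseteq> {a}"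
  proof
    fix Q assume "Q \<in> F"
    then obtain a where "a \<in> K" "a \<in> Q" "Q \<inter> (K \<union> \<Union>(insert P F - {Q})) \<subseteq> {a}"
      using insert.prems(4) by blast
    then show "\<exists>a\<in>K. a \<in> Q \<and> Q \<inter> (K \<union> \<Union>(F - {Q})) \<subseteq> {a}" by blast
  qed
  then have AR_KF: "AR (K \<union> \<Union>F)"
    using insert.IH insert.prems by simp
  obtain a where a: "a \<in> K" "a \<in> P" "P \<inter> (K \<union> \<Union>(insert P F - {P})) \<subseteq> {a}"
    using insert.prems(4) by blast
  have "insert P F - {P} = F"
    using insert.hyps(2) by blast
  with a have meet: "(K \<union> \<Union>F) \<inter> P = {a}"
    by blast
  have "AR ((K \<union> \<Union>F) \<union> P)"
  proof (rule AR_closed_Un)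
    show "closed (K \<union> \<Union>F)"
      using insert.prems(2,3) insert.hyps(1) by (intro closed_Un closed_Union) auto
    show "closed P" "AR P"
      using insert.prems(3) a(2) by (auto intro: convex_imp_AR)
    show "AR ((K \<union> \<Union>F) \<inter> P)"
      unfolding meet by (rule AR_singleton)
  qed (rule AR_KF)
  moreover have "K \<union> \<Union>(insert P F) = (K \<union> \<Union>F) \<union> P"
    by blast
  ultimately show ?case by simp
qed simp

lemma retract_of_collapsing_closed_pieces:
  fixes r :: "'a::topological_space \<Rightarrow> 'a"
  assumes "finite I" "closed S" "closed K" "K \<subseteq> S" "\<And>i. i \<in> I \<Longrightarrow> closed (Q i)"
    and cover: "S \<subseteq> K \<union> (\<Union>i\<in>I. Q i)"
    and fixed: "\<And>x. x \<in> K \<Longrightarrow> r x = x"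
    and collapse: "\<And>i x. i \<in> I \<Longrightarrow> x \<in> S \<Longrightarrow> x \<in> Q i \<Longrightarrow> r x = p i"
    and p: "\<And>i. i \<in> I \<Longrightarrow> p i \<in> K"
  shows "K retract_of S"
proof -
  have "continuous_on (K \<union> (\<Union>i\<in>I. S \<inter> Q i)) r"
  proof (rule continuous_on_closed_Un)
    show "continuous_on K r"
      by (rule continuous_on_eq[OF continuous_on_id]) (simp add: fixed)
    show "continuous_on (\<Union>i\<in>I. S \<inter> Q i) r"
    proof (rule continuous_on_closed_Union[OF assms(1)])
      fix i assume i: "i \<in> I"
      show "closed (S \<inter> Q i)" using assms(2) assms(5)[OF i] by (rule closed_Int)
      show "continuous_on (S \<inter> Q i) r"
        by (rule continuous_on_eq[OF continuous_on_const]) (simp add: collapse[OF i])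
    qed
    show "closed (\<Union>i\<in>I. S \<inter> Q i)"
      using assms(1,2,5) by (intro closed_UN) auto
  qed fact
  moreover have "S = K \<union> (\<Union>i\<in>I. S \<inter> Q i)"
    using cover assms(4) by blast
  ultimately have "continuous_on S r" by simp
  moreover have "r x \<in> K" if x: "x \<in> S" for x
  proof -
    consider "x \<in> K" | i where "i \<in> I" "x \<in> Q i" using cover x by blast
    then show ?thesis by cases (simp_all add: fixed collapse[OF _ x] p)
  qed
  ultimately have "retraction S K r"
    using assms(4) fixed by (auto simp: retraction_def)
  then show ?thesis unfolding retract_of_def by blast
qed

locale finite_metric_tree =
  fixes \<Gamma> :: "'a::euclidean_space set" and V :: "'a set" and E :: "('a \<times> 'a) set"
  assumes metric_tree: "metric_tree \<Gamma> V E"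
begin

lemma finite_V: "finite V"
  using metric_tree by (simp add: metric_tree_def)

lemma V_nonempty: "V \<noteq> {}"
  using metric_tree by (simp add: metric_tree_def)

lemma finite_E: "finite E"
proof (rule finite_subset)
  show "E \<subseteq> V \<times> V" using metric_tree by (simp add: metric_tree_def)
qed (simp add: finite_V)

lemma edge_ends:
  assumes "(a,b) \<in> E" shows "a \<in> V \<and> b \<in> V \<and> a \<noteq> b"
proof -
  have "E \<subseteq> V \<times> V" "\<forall>(a,b)\<in>E. a \<noteq> b"
    using metric_tree by (simp_all add: metric_tree_def)
  then show ?thesis using assms by blast
qed

lemma \<Gamma>_eq: "\<Gamma> = V \<union> (\<Union>(a,b)\<in>E. closed_segment a b)"
  using metric_tree by (simp add: metric_tree_def)

lemma V_subset: "V \<subseteq> \<Gamma>"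
  using \<Gamma>_eq by blast

lemma edge_subset: "(a,b) \<in> E \<Longrightarrow> closed_segment a b \<subseteq> \<Gamma>"
  using \<Gamma>_eq by blast

lemma open_edge_disjoint_V:
  assumes "(a,b) \<in> E" "x \<in> open_segment a b" shows "x \<notin> V"
proof -
  have "\<forall>(a,b)\<in>E. open_segment a b \<inter> V = {}"
    using metric_tree by (simp add: metric_tree_def)
  then show ?thesis using assms by blast
qed

lemma open_edge_unique:
  assumes "(a,b) \<in> E" "(a',b') \<in> E" "x \<in> open_segment a b" "x \<in> closed_segment a' b'"
  shows "(a',b') = (a,b)"
proof -
  have "\<forall>e\<in>E. \<forall>e'\<in>E. e \<noteq> e' \<longrightarrow> open_segment (fst e) (snd e) \<inter> closed_segment (fst e') (snd e') = {}"
    using metric_tree by (simp add: metric_tree_def)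
  then have "(a,b) \<noteq> (a',b') \<longrightarrow> open_segment a b \<inter> closed_segment a' b' = {}"
    using assms(1,2) by fastforce
  then show ?thesis using assms(3,4) by blast
qed

lemma contractible_\<Gamma>: "contractible \<Gamma>"
  using metric_tree unfolding metric_tree_def by (elim conjE)

lemma closed_\<Gamma>: "closed \<Gamma>"
  unfolding \<Gamma>_eq using finite_V finite_E by (intro closed_Un finite_imp_closed closed_UN) auto

lemma edge_point_cases:
  assumes "(a,b) \<in> E" "x \<in> closed_segment a b"
  obtains "x = a" | "x = b" | "x \<in> open_segment a b" "x \<notin> V"
  using assms open_edge_disjoint_V by (auto simp: open_segment_def)

lemma point_cases:
  assumes "x \<in> \<Gamma>"
  obtains "x \<in> V" | a b where "(a,b) \<in> E" "x \<in> open_segment a b"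
  using assms edge_ends unfolding \<Gamma>_eq by (auto simp: open_segment_def)

lemma edges_meet_in_V:
  assumes "(a,b) \<in> E" "(a',b') \<in> E" "(a',b') \<noteq> (a,b)"
    and "x \<in> closed_segment a b" "x \<in> closed_segment a' b'"
  shows "x \<in> V"
proof (cases rule: edge_point_cases[OF assms(1,4)])
  case 3
  then show ?thesis using assms open_edge_unique by blast
qed (use assms edge_ends in blast)+

definition rest_of_edge :: "'a \<times> 'a \<Rightarrow> 'a set" where
  "rest_of_edge e = V \<union> (\<Union>(a,b)\<in>E - {e}. closed_segment a b)"

lemma closed_rest_of_edge: "closed (rest_of_edge e)"
  unfolding rest_of_edge_def using finite_V finite_E
  by (intro closed_Un closed_UN finite_imp_closed) auto

lemma \<Gamma>_split_at_edge: "(a,b) \<in> E \<Longrightarrow> \<Gamma> = closed_segment a b \<union> rest_of_edge (a,b)"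
  unfolding rest_of_edge_def \<Gamma>_eq by blast

lemma edge_Int_rest_of_edge:
  assumes e: "(a,b) \<in> E" shows "closed_segment a b \<inter> rest_of_edge (a,b) \<subseteq> {a,b}"
proof
  fix x assume x: "x \<in> closed_segment a b \<inter> rest_of_edge (a,b)"
  show "x \<in> {a,b}"
  proof (rule ccontr)
    assume "x \<notin> {a,b}"
    then have x_open: "x \<in> open_segment a b" and "x \<notin> V"
      using x e open_edge_disjoint_V by (auto simp: open_segment_def)
    then have "x \<in> (\<Union>(a',b')\<in>E - {(a,b)}. closed_segment a' b')"
      using x by (simp add: rest_of_edge_def)
    then obtain a' b' where "(a',b') \<in> E" "(a',b') \<noteq> (a,b)" "x \<in> closed_segment a' b'"
      by auto
    then show False
      using open_edge_unique[OF e _ x_open] by blast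
  qed
qed

lemma connected_subset_edge:
  assumes e: "(a,b) \<in> E" and C: "C \<subseteq> \<Gamma>" "connected C" "a \<notin> C" "b \<notin> C"
    and meets: "closed_segment a b \<inter> C \<noteq> {}"
  shows "C \<subseteq> closed_segment a b"
proof -
  have cover: "C \<subseteq> closed_segment a b \<union> rest_of_edge (a,b)"
    using \<Gamma>_split_at_edge[OF e] C(1) by blast
  have "closed_segment a b \<inter> rest_of_edge (a,b) \<inter> C = {}"
    using edge_Int_rest_of_edge[OF e] C(3,4) by blast
  then have "closed_segment a b \<inter> C = {} \<or> rest_of_edge (a,b) \<inter> C = {}"
    using connected_closedD[OF C(2) _ cover closed_segment closed_rest_of_edge] by blast
  then show ?thesis using cover meets by blast
qed

lemma edge_winding_logarithm:
  assumes e: "(a,b) \<in> E"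
  obtains L where "continuous_on \<Gamma> L"
    "\<And>x. x \<in> closed_segment a b \<Longrightarrow> exp (L x) = exp (2 * of_real pi * \<i> * of_real (seg_coord a b x))"
    "\<And>x. x \<in> rest_of_edge (a,b) \<Longrightarrow> exp (L x) = 1"
    "L b - L a = 2 * of_real pi * \<i>"
proof -
  have ab: "a \<noteq> b" using edge_ends[OF e] by blast
  define h where
    "h x = (if x \<in> closed_segment a b then exp (2 * of_real pi * \<i> * of_real (seg_coord a b x)) else 1)" for x
  have h_seg: "h x = exp (2 * of_real pi * \<i> * of_real (seg_coord a b x))" if "x \<in> closed_segment a b" for x
    using that by (simp add: h_def)
  have h_rest: "h x = 1" if "x \<in> rest_of_edge (a,b)" for x
    using edge_Int_rest_of_edge[OF e] that seg_coord_right[OF ab] by (auto simp: h_def)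
  have "continuous_on (closed_segment a b) (\<lambda>x. exp (2 * of_real pi * \<i> * of_real (seg_coord a b x)))"
    by (intro continuous_intros)
  then have "continuous_on (closed_segment a b) h"
    by (rule continuous_on_eq) (simp add: h_seg)
  moreover have "continuous_on (rest_of_edge (a,b)) h"
    by (rule continuous_on_eq[OF continuous_on_const]) (simp add: h_rest)
  ultimately have "continuous_on \<Gamma> h"
    unfolding \<Gamma>_split_at_edge[OF e] by (rule continuous_on_closed_Un[OF closed_segment closed_rest_of_edge])
  moreover have "h x \<noteq> 0" for x by (simp add: h_def)
  ultimately obtain L where L: "continuous_on \<Gamma> L" and L_h: "\<And>x. x \<in> \<Gamma> \<Longrightarrow> h x = exp (L x)"
    using continuous_logarithm_on_contractible[OF _ contractible_\<Gamma>] by blast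
  have seg: "closed_segment a b \<subseteq> \<Gamma>" using edge_subset[OF e] .
  have L_seg: "exp (L x) = exp (2 * of_real pi * \<i> * of_real (seg_coord a b x))"
    if "x \<in> closed_segment a b" for x
    using L_h[of x] h_seg[OF that] seg that by auto
  have L_rest: "exp (L x) = 1" if "x \<in> rest_of_edge (a,b)" for x
    using L_h[of x] h_rest[OF that] \<Gamma>_split_at_edge[OF e] that by auto
  have "continuous_on (closed_segment a b) L"
    using L seg by (rule continuous_on_subset)
  moreover have "continuous_on (closed_segment a b) (\<lambda>x. 2 * of_real pi * \<i> * of_real (seg_coord a b x))"
    by (intro continuous_intros)
  ultimately have "L b - L a = 2 * of_real pi * \<i> * of_real (seg_coord a b b) - 2 * of_real pi * \<i> * of_real (seg_coord a b a)"
    using continuous_log_unique_up_to_constant[of "closed_segment a b" L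
        "\<lambda>x. 2 * of_real pi * \<i> * of_real (seg_coord a b x)" a b] L_seg
    by simp
  then have "L b - L a = 2 * of_real pi * \<i>" using seg_coord_right[OF ab] by simp
  then show ?thesis using that[OF L L_seg L_rest] by blast
qed

text \<open>Since \<open>C\<close> misses a ball around \<open>z\<close>, the coordinate along the edge can be cut at \<open>z\<close>:
  it is kept before \<open>z\<close> and lowered by one full turn after it, so that it vanishes at both
  endpoints and is continuous on \<open>C\<close>.\<close>
lemma edge_angle_cut:
  assumes e: "(a,b) \<in> E" and C: "closed C" "C \<subseteq> \<Gamma>"
    and z: "z \<in> closed_segment a b" "z \<notin> C" "z \<noteq> b"
  obtains \<theta> where "continuous_on C \<theta>"
    "\<And>x. x \<in> C \<inter> closed_segment a b \<Longrightarrow>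
      exp (2 * of_real pi * \<i> * of_real (\<theta> x)) = exp (2 * of_real pi * \<i> * of_real (seg_coord a b x))"
    "\<And>x. x \<in> C \<inter> rest_of_edge (a,b) \<Longrightarrow> \<theta> x = 0"
proof -
  have ab: "a \<noteq> b" using edge_ends[OF e] by blast
  obtain \<epsilon> where "\<epsilon> > 0" and ball_C: "ball z \<epsilon> \<inter> C = {}"
    using C(1) z(2) unfolding closed_def open_contains_ball by blast
  define s where "s = seg_coord a b z"
  have "s \<noteq> 1"
    using closed_segment_seg_coord(1)[OF ab z(1)] z(3) by (auto simp: s_def)
  then have s: "0 \<le> s" "s < 1"
    using closed_segment_seg_coord(2,3)[OF ab z(1)] by (simp_all add: s_def)
  define A where "A = closed_segment a b \<inter> {x. seg_coord a b x \<le> s} - ball z \<epsilon>"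
  define B where "B = closed_segment a b \<inter> {x. s \<le> seg_coord a b x} - ball z \<epsilon>"
  define \<theta> where
    "\<theta> x = (if x \<in> A then seg_coord a b x else if x \<in> B then seg_coord a b x - 1 else 0)" for x
  have "A \<inter> B = {}"
    using inj_on_seg_coord[OF ab] z(1) \<open>\<epsilon> > 0\<close> unfolding A_def B_def s_def inj_on_def by force
  have \<theta>_rest: "\<theta> x = 0" if "x \<in> rest_of_edge (a,b)" for x
    using edge_Int_rest_of_edge[OF e] that seg_coord_right[OF ab] s \<open>A \<inter> B = {}\<close>
    by (auto simp: \<theta>_def A_def B_def)
  have closed_AB: "closed A" "closed B" unfolding A_def B_def
    by (intro closed_Diff closed_Int closed_segment closed_Collect_le open_ball continuous_intros)+
  have "continuous_on (A \<union> B \<union> rest_of_edge (a,b)) \<theta>"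
  proof (intro continuous_on_closed_Un closed_Un closed_AB closed_rest_of_edge)
    have "continuous_on A (\<lambda>x. seg_coord a b x)" by (intro continuous_intros)
    then show "continuous_on A \<theta>"
      by (rule continuous_on_eq) (simp add: \<theta>_def)
    have "continuous_on B (\<lambda>x. seg_coord a b x - 1)" by (intro continuous_intros)
    then show "continuous_on B \<theta>"
      by (rule continuous_on_eq) (use \<open>A \<inter> B = {}\<close> in \<open>auto simp: \<theta>_def\<close>)
    show "continuous_on (rest_of_edge (a,b)) \<theta>"
      by (rule continuous_on_eq[OF continuous_on_const]) (simp add: \<theta>_rest)
  qed
  moreover have "C \<subseteq> A \<union> B \<union> rest_of_edge (a,b)"
    using C(2) ball_C \<Gamma>_split_at_edge[OF e] by (auto simp: A_def B_def)
  ultimately have "continuous_on C \<theta>" by (rule continuous_on_subset)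
  moreover have "exp (2 * of_real pi * \<i> * of_real (\<theta> x)) = exp (2 * of_real pi * \<i> * of_real (seg_coord a b x))"
    if x: "x \<in> C \<inter> closed_segment a b" for x
  proof -
    have "exp (2 * of_real pi * \<i> * of_real (seg_coord a b x - 1))
        = exp (2 * of_real pi * \<i> * of_real (seg_coord a b x))"
      by (simp add: algebra_simps exp_diff)
    moreover have "x \<in> A \<or> x \<in> B" using x ball_C by (auto simp: A_def B_def)
    ultimately show ?thesis by (auto simp: \<theta>_def)
  qed
  ultimately show ?thesis using that \<theta>_rest by blast
qed

lemma closed_connected_contains_edge:
  assumes e: "(a,b) \<in> E" and C: "C \<subseteq> \<Gamma>" "closed C" "connected C" "a \<in> C" "b \<in> C"
  shows "closed_segment a b \<subseteq> C"
proof (rule ccontr)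
  assume "\<not> closed_segment a b \<subseteq> C"
  then obtain z where z: "z \<in> closed_segment a b" "z \<notin> C" by blast
  obtain L where L: "continuous_on \<Gamma> L"
    "\<And>x. x \<in> closed_segment a b \<Longrightarrow> exp (L x) = exp (2 * of_real pi * \<i> * of_real (seg_coord a b x))"
    "\<And>x. x \<in> rest_of_edge (a,b) \<Longrightarrow> exp (L x) = 1"
    "L b - L a = 2 * of_real pi * \<i>"
    using edge_winding_logarithm[OF e] by blast
  obtain \<theta> where \<theta>: "continuous_on C \<theta>"
    "\<And>x. x \<in> C \<inter> closed_segment a b \<Longrightarrow>
      exp (2 * of_real pi * \<i> * of_real (\<theta> x)) = exp (2 * of_real pi * \<i> * of_real (seg_coord a b x))"
    "\<And>x. x \<in> C \<inter> rest_of_edge (a,b) \<Longrightarrow> \<theta> x = 0"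
    using edge_angle_cut[OF e C(2,1) z] C(5) z(2) by metis
  have "exp (L x) = exp (2 * of_real pi * \<i> * of_real (\<theta> x))" if "x \<in> C" for x
    using that C(1) \<Gamma>_split_at_edge[OF e] L(2,3) \<theta>(2,3) by auto
  moreover have "continuous_on C (\<lambda>x. 2 * of_real pi * \<i> * of_real (\<theta> x))"
    using \<theta>(1) by (intro continuous_intros)
  ultimately have "L b - L a = 2 * of_real pi * \<i> * of_real (\<theta> b) - 2 * of_real pi * \<i> * of_real (\<theta> a)"
    using continuous_log_unique_up_to_constant[OF C(3) continuous_on_subset[OF L(1) C(1)]] C(4,5)
    by blast
  moreover have "a \<in> rest_of_edge (a,b)" "b \<in> rest_of_edge (a,b)"
    using edge_ends[OF e] by (auto simp: rest_of_edge_def)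
  ultimately have "L b - L a = 0" using \<theta>(3) C(4,5) by simp
  then show False using L(4) by simp
qed

definition edge_through :: "'a \<Rightarrow> 'a \<times> 'a" where
  "edge_through x = (SOME e. e \<in> E \<and> x \<in> open_segment (fst e) (snd e))"

lemma edge_through_eq:
  assumes "(a,b) \<in> E" "x \<in> open_segment a b" shows "edge_through x = (a,b)"
  unfolding edge_through_def
proof (rule some_equality)
  fix e assume e: "e \<in> E \<and> x \<in> open_segment (fst e) (snd e)"
  have "(fst e, snd e) = (a,b)"
    using open_edge_unique[of "fst e" "snd e" a b x] e assms(1) open_closed_segment[OF assms(2)]
    by simp
  then show "e = (a,b)" by simp
qed (use assms in simp)

text \<open>Off \<open>\<Gamma>\<close>, \<open>edge_through\<close> is an unspecified \<open>SOME\<close> value, so \<open>edge_interp\<close> is only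
  meaningful on \<open>\<Gamma>\<close>.\<close>
definition edge_interp :: "('a \<Rightarrow> real) \<Rightarrow> 'a \<Rightarrow> real" where
  "edge_interp u x = (if x \<in> V then u x else
     (case edge_through x of (a,b) \<Rightarrow> (1 - seg_coord a b x) * u a + seg_coord a b x * u b))"

lemma edge_interp_vertex [simp]: "x \<in> V \<Longrightarrow> edge_interp u x = u x"
  by (simp add: edge_interp_def)

lemma edge_interp_edge:
  assumes e: "(a,b) \<in> E" and x: "x \<in> closed_segment a b"
  shows "edge_interp u x = (1 - seg_coord a b x) * u a + seg_coord a b x * u b"
  using e x
proof (cases rule: edge_point_cases)
  case 3 then show ?thesis using edge_through_eq[OF e] by (simp add: edge_interp_def)
qed (use edge_ends[OF e] seg_coord_right[of a b] in auto)

lemma edge_interp_edge_mem_convex: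
  assumes e: "(a,b) \<in> E" and x: "x \<in> closed_segment a b"
    and K: "convex K" "u a \<in> K" "u b \<in> K"
  shows "edge_interp u x \<in> K"
proof -
  have "a \<noteq> b" using edge_ends[OF e] by blast
  then have "0 \<le> seg_coord a b x" "seg_coord a b x \<le> 1"
    using closed_segment_seg_coord(2,3) x by auto
  then show ?thesis
    using convexD[OF K] edge_interp_edge[OF e x] by simp
qed

lemma edge_interp_mem_convex:
  assumes "x \<in> \<Gamma>" "convex K" "u ` V \<subseteq> K"
  shows "edge_interp u x \<in> K"
  using assms(1)
proof (cases rule: point_cases)
  case (2 a b)
  then show ?thesis
    using edge_interp_edge_mem_convex[OF 2(1) open_closed_segment[OF 2(2)] assms(2)]
      edge_ends assms(3) by blast
qed (use assms in auto)

lemma edge_linear_edge_interp: "edge_linear E (edge_interp u)"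
  unfolding edge_linear_def
proof clarify
  fix a b and t :: real assume e: "(a,b) \<in> E" and t: "t \<in> {0..1}"
  have "(1 - t) *\<^sub>R a + t *\<^sub>R b \<in> closed_segment a b"
    using t by (auto simp: in_segment)
  moreover have "a \<noteq> b" "a \<in> V" "b \<in> V" using edge_ends[OF e] by auto
  ultimately show "edge_interp u ((1 - t) *\<^sub>R a + t *\<^sub>R b) = (1 - t) * edge_interp u a + t * edge_interp u b"
    by (simp add: edge_interp_edge[OF e] seg_coord_combination)
qed

lemma continuous_on_edge_interp: "continuous_on \<Gamma> (edge_interp u)"
proof -
  have "continuous_on (closed_segment a b) (edge_interp u)" if e: "(a,b) \<in> E" for a b
  proof -
    have "continuous_on (closed_segment a b) (\<lambda>x. (1 - seg_coord a b x) * u a + seg_coord a b x * u b)"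
      by (intro continuous_intros)
    then show ?thesis
      by (rule continuous_on_eq) (simp add: edge_interp_edge[OF e])
  qed
  then have "continuous_on (\<Union>(a,b)\<in>E. closed_segment a b) (edge_interp u)"
    using finite_E by (intro continuous_on_closed_Union) auto
  moreover have "continuous_on V (edge_interp u)"
    using finite_V by (rule continuous_on_finite)
  ultimately show ?thesis
    unfolding \<Gamma>_eq using finite_V finite_E
    by (intro continuous_on_closed_Un finite_imp_closed closed_UN) auto
qed

lemma edge_interp_cong:
  assumes "\<And>v. v \<in> V \<Longrightarrow> u v = w v" and "x \<in> \<Gamma>"
  shows "edge_interp u x = edge_interp w x"
  using assms(2)
proof (cases rule: point_cases)
  case (2 a b)
  then have "x \<in> closed_segment a b" "a \<in> V" "b \<in> V"
    using edge_ends open_closed_segment by auto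
  then show ?thesis by (simp add: edge_interp_edge[OF 2(1)] assms(1))
qed (use assms in simp)

lemma edge_interp_sum:
  "edge_interp (\<lambda>y. \<Sum>\<alpha>\<in>I. us \<alpha> y) x = (\<Sum>\<alpha>\<in>I. edge_interp (us \<alpha>) x)"
  by (simp add: edge_interp_def sum_distrib_left sum.distrib split: prod.split)

lemma edge_interp_eq_if_edge_linear:
  assumes "edge_linear E f" "x \<in> \<Gamma>"
  shows "edge_interp f x = f x"
  using assms(2)
proof (cases rule: point_cases)
  case (2 a b)
  have x: "x \<in> closed_segment a b" using 2(2) by (rule open_closed_segment)
  have "a \<noteq> b" using edge_ends[OF 2(1)] by blast
  note coord = closed_segment_seg_coord[OF this x]
  have "\<forall>t\<in>{0..1}. f ((1 - t) *\<^sub>R a + t *\<^sub>R b) = (1 - t) * f a + t * f b"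
    using assms(1) 2(1) unfolding edge_linear_def by blast
  then have "f ((1 - seg_coord a b x) *\<^sub>R a + seg_coord a b x *\<^sub>R b)
      = (1 - seg_coord a b x) * f a + seg_coord a b x * f b"
    using coord(2,3) by simp
  then have "f x = (1 - seg_coord a b x) * f a + seg_coord a b x * f b"
    unfolding coord(1)[symmetric] .
  then show ?thesis using edge_interp_edge[OF 2(1) x] by simp
qed simp

definition induced_subgraph :: "'a set \<Rightarrow> 'a set" where
  "induced_subgraph W = W \<union> (\<Union>(a,b)\<in>E \<inter> W \<times> W. closed_segment a b)"

definition crossing_edges :: "'a set \<Rightarrow> ('a \<times> 'a) set" where
  "crossing_edges W = {(a,b). (a,b) \<in> E \<and> (a \<in> W) \<noteq> (b \<in> W)}"

definition attachment :: "'a set \<Rightarrow> 'a \<times> 'a \<Rightarrow> 'a" where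
  "attachment W e = (if fst e \<in> W then fst e else snd e)"

lemma crossing_edgesD:
  assumes "(a,b) \<in> crossing_edges W"
  shows "(a,b) \<in> E" "attachment W (a,b) \<in> W" "attachment W (a,b) \<in> closed_segment a b"
    "{a,b} \<inter> W = {attachment W (a,b)}"
  using assms by (auto simp: crossing_edges_def attachment_def)

lemma finite_crossing_edges: "finite (crossing_edges W)"
  using finite_E by (rule rev_finite_subset) (auto simp: crossing_edges_def)

lemma closed_induced_subgraph: "W \<subseteq> V \<Longrightarrow> closed (induced_subgraph W)"
  unfolding induced_subgraph_def using finite_subset[OF _ finite_V] finite_E
  by (intro closed_Un finite_imp_closed closed_UN) auto

lemma ANR_induced_subgraph:
  assumes "W \<subseteq> V" shows "ANR (induced_subgraph W)"
proof -
  have "induced_subgraph W = \<Union>((\<lambda>v. {v}) ` W \<union> (\<lambda>(a,b). closed_segment a b) ` (E \<inter> W \<times> W))"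
    by (auto simp: induced_subgraph_def)
  moreover have "ANR (\<Union>((\<lambda>v. {v}) ` W \<union> (\<lambda>(a,b). closed_segment a b) ` (E \<inter> W \<times> W)))"
    using finite_subset[OF assms finite_V] finite_E
    by (intro ANR_finite_Union_convex_closed) auto
  ultimately show ?thesis by simp
qed

lemma induced_subgraph_Int_V: "W \<subseteq> V \<Longrightarrow> induced_subgraph W \<inter> V = W"
  by (auto simp: induced_subgraph_def elim: edge_point_cases)

lemma open_edge_Int_induced_subgraph:
  assumes e: "(a,b) \<in> E" and "\<not> (a \<in> W \<and> b \<in> W)" "W \<subseteq> V" and x: "x \<in> open_segment a b"
  shows "x \<notin> induced_subgraph W"
proof
  assume "x \<in> induced_subgraph W"
  moreover have "x \<notin> W" using open_edge_disjoint_V[OF e x] assms(3) by blast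
  ultimately obtain a' b' where "(a',b') \<in> E" "a' \<in> W" "b' \<in> W" "x \<in> closed_segment a' b'"
    by (auto simp: induced_subgraph_def)
  then show False using open_edge_unique[OF e _ x] assms(2) by blast
qed

lemma crossing_edge_Int_induced_subgraph:
  assumes ab: "(a,b) \<in> crossing_edges W" and W: "W \<subseteq> V"
  shows "closed_segment a b \<inter> induced_subgraph W = {attachment W (a,b)}"
proof -
  note cross = crossing_edgesD[OF ab]
  have "\<not> (a \<in> W \<and> b \<in> W)"
    using cross(4) edge_ends[OF cross(1)] by auto
  then have "open_segment a b \<inter> induced_subgraph W = {}"
    using open_edge_Int_induced_subgraph[OF cross(1) _ W] by blast
  moreover have "{a,b} \<inter> induced_subgraph W = {attachment W (a,b)}"
    using induced_subgraph_Int_V[OF W] edge_ends[OF cross(1)] cross(4) by auto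
  moreover have "closed_segment a b = {a,b} \<union> open_segment a b"
    by (auto simp: open_segment_def)
  ultimately show ?thesis by blast
qed

lemma induced_subgraph_subset:
  assumes "S \<subseteq> \<Gamma>" "closed S" "connected S"
  shows "induced_subgraph (V \<inter> S) \<subseteq> S"
  using closed_connected_contains_edge[OF _ assms] by (auto simp: induced_subgraph_def)

lemma connected_subset_induced_subgraph_Un_crossing:
  assumes S: "S \<subseteq> \<Gamma>" "connected S" "V \<inter> S \<noteq> {}"
  shows "S \<subseteq> induced_subgraph (V \<inter> S) \<union> (\<Union>(a,b)\<in>crossing_edges (V \<inter> S). closed_segment a b)"
proof
  fix x assume "x \<in> S"
  with S(1) have "x \<in> \<Gamma>" by blast
  then show "x \<in> induced_subgraph (V \<inter> S) \<union> (\<Union>(a,b)\<in>crossing_edges (V \<inter> S). closed_segment a b)"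
  proof (cases rule: point_cases)
    case 1 then show ?thesis using \<open>x \<in> S\<close> by (simp add: induced_subgraph_def)
  next
    case (2 a b)
    have x: "x \<in> closed_segment a b" using 2(2) by (rule open_closed_segment)
    have "a \<in> S \<or> b \<in> S"
    proof (rule ccontr)
      assume "\<not> (a \<in> S \<or> b \<in> S)"
      then have "S \<subseteq> closed_segment a b"
        using connected_subset_edge[OF 2(1) S(1,2)] x \<open>x \<in> S\<close> by blast
      moreover obtain v where "v \<in> V" "v \<in> S" using S(3) by blast
      ultimately show False
        using \<open>\<not> (a \<in> S \<or> b \<in> S)\<close> by (auto elim: edge_point_cases[OF 2(1)])
    qed
    then consider "a \<in> S" "b \<in> S" | "(a,b) \<in> crossing_edges (V \<inter> S)"
      using edge_ends[OF 2(1)] 2(1) by (auto simp: crossing_edges_def)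
    then show ?thesis
    proof cases
      case 1 then show ?thesis
        using 2(1) edge_ends[OF 2(1)] x by (auto simp: induced_subgraph_def)
    qed (use x in blast)
  qed
qed

lemma induced_subgraph_retract_of:
  assumes S: "S \<subseteq> \<Gamma>" "closed S" "connected S" "V \<inter> S \<noteq> {}"
  shows "induced_subgraph (V \<inter> S) retract_of S"
proof -
  define W where "W = V \<inter> S"
  define K where "K = induced_subgraph W"
  define r where "r x = (if x \<in> K then x else attachment W (edge_through x))" for x
  have W: "W \<subseteq> V" by (simp add: W_def)
  have r_crossing: "r x = attachment W (a,b)"
    if ab: "(a,b) \<in> crossing_edges W" and x: "x \<in> S" "x \<in> closed_segment a b" for a b x
  proof (cases "x \<in> K")
    case True
    then show ?thesis
      using crossing_edge_Int_induced_subgraph[OF ab W] x by (auto simp: r_def K_def)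
  next
    case False
    have "x \<notin> V" using False x W_def K_def induced_subgraph_Int_V[OF W] by auto
    then have "x \<in> open_segment a b"
      using x edge_ends[OF crossing_edgesD(1)[OF ab]] by (auto simp: open_segment_def)
    then show ?thesis
      using False edge_through_eq[OF crossing_edgesD(1)[OF ab]] by (simp add: r_def)
  qed
  have "K retract_of S"
  proof (rule retract_of_collapsing_closed_pieces[where Q = "\<lambda>(a,b). closed_segment a b"
        and p = "attachment W" and r = r])
    show "K \<subseteq> S"
      unfolding K_def W_def by (rule induced_subgraph_subset[OF S(1-3)])
    show "S \<subseteq> K \<union> (\<Union>(a,b)\<in>crossing_edges W. closed_segment a b)"
      using connected_subset_induced_subgraph_Un_crossing[OF S(1,3,4)] unfolding K_def W_def .
    show "closed K" unfolding K_def using W by (rule closed_induced_subgraph)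
    show "r x = x" if "x \<in> K" for x using that by (simp add: r_def)
    show "r x = attachment W e"
      if "e \<in> crossing_edges W" "x \<in> S" "x \<in> (\<lambda>(a,b). closed_segment a b) e" for e x
      using that r_crossing by (auto split: prod.splits)
    show "attachment W e \<in> K" if "e \<in> crossing_edges W" for e
      using that crossing_edgesD(2)[of "fst e" "snd e" W] by (simp add: K_def induced_subgraph_def)
  qed (simp_all add: finite_crossing_edges S(2) split: prod.split)
  then show ?thesis unfolding K_def W_def .
qed

lemma AR_induced_subgraph:
  assumes "S \<subseteq> \<Gamma>" "closed S" "contractible S" "V \<inter> S \<noteq> {}"
  shows "AR (induced_subgraph (V \<inter> S))"
proof -
  have "induced_subgraph (V \<inter> S) retract_of S"
    using assms contractible_imp_connected by (intro induced_subgraph_retract_of) auto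
  then have "contractible (induced_subgraph (V \<inter> S))"
    using assms(3) retract_of_contractible by blast
  moreover have "induced_subgraph (V \<inter> S) \<noteq> {}"
    using assms(4) by (auto simp: induced_subgraph_def)
  ultimately show ?thesis
    using ANR_induced_subgraph by (simp add: AR_ANR)
qed

lemma edge_interp_superlevel_eq:
  fixes u :: "'a \<Rightarrow> real" and c :: real
  defines "W \<equiv> {v\<in>V. c \<le> u v}"
  shows "{x\<in>\<Gamma>. c \<le> edge_interp u x}
    = induced_subgraph W \<union> (\<Union>(a,b)\<in>crossing_edges W. {x\<in>closed_segment a b. c \<le> edge_interp u x})"
    (is "?T = ?K \<union> ?P")
proof (rule equalityI)
  show "?T \<subseteq> ?K \<union> ?P"
  proof (rule subsetI)
    fix x assume "x \<in> ?T"
    then have "x \<in> \<Gamma>" and c_le: "c \<le> edge_interp u x" by auto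
    from \<open>x \<in> \<Gamma>\<close> show "x \<in> ?K \<union> ?P"
    proof (cases rule: point_cases)
      case 1 then show ?thesis using c_le by (simp add: W_def induced_subgraph_def)
    next
      case (2 a b)
      have x: "x \<in> closed_segment a b" using 2(2) by (rule open_closed_segment)
      have "a \<in> W \<or> b \<in> W"
      proof (rule ccontr)
        assume "\<not> (a \<in> W \<or> b \<in> W)"
        then have "edge_interp u x \<in> {..<c}"
          using edge_ends[OF 2(1)] by (intro edge_interp_edge_mem_convex[OF 2(1) x]) (auto simp: W_def)
        then show False using c_le by simp
      qed
      then consider "a \<in> W" "b \<in> W" | "(a,b) \<in> crossing_edges W"
        using 2(1) by (auto simp: crossing_edges_def)
      then show ?thesis
      proof cases
        case 1 then show ?thesis using 2(1) x by (auto simp: induced_subgraph_def)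
      next
        case 2 then show ?thesis using x c_le by blast
      qed
    qed
  qed
  have "c \<le> edge_interp u x" if "(a,b) \<in> E" "a \<in> W" "b \<in> W" "x \<in> closed_segment a b" for a b x
    using edge_interp_edge_mem_convex[OF that(1,4), of "{c..}"] that(2,3) by (simp add: W_def)
  then have "?K \<subseteq> ?T"
    using V_subset edge_subset by (fastforce simp: induced_subgraph_def W_def)
  moreover have "?P \<subseteq> ?T"
    using edge_subset by (auto simp: crossing_edges_def)
  ultimately show "?K \<union> ?P \<subseteq> ?T" by blast
qed

lemma edge_superlevel_piece:
  assumes e: "(a,b) \<in> E"
  shows "convex {x\<in>closed_segment a b. c \<le> edge_interp u x}"
    and "closed {x\<in>closed_segment a b. c \<le> edge_interp u x}"
proof -
  have eq: "{x\<in>closed_segment a b. c \<le> edge_interp u x}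
      = closed_segment a b \<inter> {x. c \<le> (1 - seg_coord a b x) * u a + seg_coord a b x * u b}"
    using edge_interp_edge[OF e] by auto
  show "convex {x\<in>closed_segment a b. c \<le> edge_interp u x}"
    unfolding eq by (intro convex_Int convex_closed_segment convex_seg_coord_superlevel)
  show "closed {x\<in>closed_segment a b. c \<le> edge_interp u x}"
    unfolding eq by (intro closed_Int closed_segment closed_Collect_le continuous_intros)
qed

lemma crossing_piece_attached:
  assumes W: "W = {v\<in>V. c \<le> u v}" and ab: "(a,b) \<in> crossing_edges W"
  shows "attachment W (a,b) \<in> induced_subgraph W"
    and "attachment W (a,b) \<in> {x\<in>closed_segment a b. c \<le> edge_interp u x}"
    and "{x\<in>closed_segment a b. c \<le> edge_interp u x} \<inter> (induced_subgraph W \<union>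
          (\<Union>(a',b')\<in>crossing_edges W - {(a,b)}. {x\<in>closed_segment a' b'. c \<le> edge_interp u x}))
        \<subseteq> {attachment W (a,b)}"
proof -
  note cross = crossing_edgesD[OF ab]
  have W_V: "W \<subseteq> V" by (simp add: W)
  show "attachment W (a,b) \<in> induced_subgraph W"
    using cross(2) by (simp add: induced_subgraph_def)
  show "attachment W (a,b) \<in> {x\<in>closed_segment a b. c \<le> edge_interp u x}"
    using cross(2,3) by (simp add: W)
  have K_meet: "closed_segment a b \<inter> induced_subgraph W \<subseteq> {attachment W (a,b)}"
    using crossing_edge_Int_induced_subgraph[OF ab W_V] by simp
  have "x \<in> induced_subgraph W"
    if "x \<in> closed_segment a b" "c \<le> edge_interp u x"
      "(a',b') \<in> crossing_edges W" "(a',b') \<noteq> (a,b)" "x \<in> closed_segment a' b'" for x a' b'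
  proof -
    have "x \<in> V"
      using edges_meet_in_V[OF cross(1) crossing_edgesD(1)[OF that(3)] that(4,1,5)] .
    then show ?thesis
      using that(2) by (simp add: W induced_subgraph_def)
  qed
  then show "{x\<in>closed_segment a b. c \<le> edge_interp u x} \<inter> (induced_subgraph W \<union>
          (\<Union>(a',b')\<in>crossing_edges W - {(a,b)}. {x\<in>closed_segment a' b'. c \<le> edge_interp u x}))
        \<subseteq> {attachment W (a,b)}"
    using K_meet by blast
qed

lemma contractible_edge_interp_superlevel:
  assumes cont: "continuous_on \<Gamma> u" and contr: "contractible {x\<in>\<Gamma>. c \<le> u x}"
    and vertex: "\<exists>v\<in>V. c \<le> u v"
  shows "contractible {x\<in>\<Gamma>. c \<le> edge_interp u x}"
proof -
  define W where "W = {v\<in>V. c \<le> u v}"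
  define K where "K = induced_subgraph W"
  define P where "P = (\<lambda>(a,b). {x\<in>closed_segment a b. c \<le> edge_interp u x})"
  have W: "W \<subseteq> V" by (simp add: W_def)
  have "{x\<in>\<Gamma>. c \<le> u x} = \<Gamma> \<inter> u -` {c..}" by auto
  then have "closed {x\<in>\<Gamma>. c \<le> u x}"
    using continuous_closed_preimage[OF cont closed_\<Gamma> closed_atLeast] by simp
  moreover have "W = V \<inter> {x\<in>\<Gamma>. c \<le> u x}" using V_subset by (auto simp: W_def)
  moreover have "V \<inter> {x\<in>\<Gamma>. c \<le> u x} \<noteq> {}" using vertex V_subset by blast
  ultimately have AR_K: "AR K"
    unfolding K_def using AR_induced_subgraph[OF _ _ contr] by auto
  have piece: "convex Q \<and> closed Q \<and> (\<exists>p\<in>K. p \<in> Q \<and> Q \<inter> (K \<union> \<Union>(P ` crossing_edges W - {Q})) \<subseteq> {p})"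
    if Q: "Q \<in> P ` crossing_edges W" for Q
  proof -
    obtain e where e: "e \<in> crossing_edges W" "Q = P e" using Q by blast
    obtain a b where ab: "e = (a,b)" using surj_pair[of e] by blast
    have "P ` crossing_edges W - {Q} \<subseteq> P ` (crossing_edges W - {(a,b)})"
      using e ab by blast
    then show ?thesis
      using crossing_piece_attached[OF W_def, of a b] edge_superlevel_piece[OF crossing_edgesD(1)]
        e ab unfolding K_def P_def by fastforce
  qed
  have "AR (K \<union> \<Union>(P ` crossing_edges W))"
    using AR_Un_convex_attached[OF finite_imageI[OF finite_crossing_edges] AR_K] piece
      closed_induced_subgraph[OF W] unfolding K_def by blast
  moreover have "{x\<in>\<Gamma>. c \<le> edge_interp u x} = K \<union> \<Union>(P ` crossing_edges W)"
    unfolding edge_interp_superlevel_eq K_def W_def P_def ..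
  ultimately show ?thesis by (simp add: AR_imp_contractible)
qed

lemma unimodal_edge_interp:
  assumes "unimodal \<Gamma> u"
  shows "unimodal \<Gamma> (edge_interp u)"
proof -
  obtain M where cont: "continuous_on \<Gamma> u" and nonneg: "\<forall>x\<in>\<Gamma>. 0 \<le> u x"
    and le_M: "\<forall>x\<in>\<Gamma>. u x \<le> M" and contr: "\<forall>c. 0 < c \<and> c \<le> M \<longrightarrow> contractible {x\<in>\<Gamma>. c \<le> u x}"
    using assms unfolding unimodal_def by blast
  define M' where "M' = Max (u ` V)"
  have "M' \<in> u ` V"
    unfolding M'_def using finite_V V_nonempty by (intro Max_in) auto
  then obtain v where v: "v \<in> V" "u v = M'" by blast
  have "u ` V \<subseteq> {0..M'}"
    using nonneg V_subset finite_V by (auto simp: M'_def intro: Max_ge)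
  then have bounds: "edge_interp u x \<in> {0..M'}" if "x \<in> \<Gamma>" for x
    using edge_interp_mem_convex[OF that convex_real_interval(5)] by blast
  show ?thesis
    unfolding unimodal_def
  proof (intro conjI exI[of _ M'])
    show "continuous_on \<Gamma> (edge_interp u)" by (rule continuous_on_edge_interp)
    show "\<forall>x\<in>\<Gamma>. 0 \<le> edge_interp u x" "\<forall>x\<in>\<Gamma>. edge_interp u x \<le> M'"
      using bounds by auto
    show "\<exists>x\<in>\<Gamma>. edge_interp u x = M'" using v V_subset by (intro bexI[of _ v]) auto
    show "\<forall>c. M' < c \<longrightarrow> {x\<in>\<Gamma>. c \<le> edge_interp u x} = {}"
      using bounds by fastforce
    show "\<forall>c. 0 < c \<and> c \<le> M' \<longrightarrow> contractible {x\<in>\<Gamma>. c \<le> edge_interp u x}"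
    proof clarify
      fix c :: real assume c: "0 < c" "c \<le> M'"
      have "M' \<le> M" using le_M v V_subset by auto
      then have "c \<le> M" using c by linarith
      then have "contractible {x\<in>\<Gamma>. c \<le> u x}" using contr c(1) by blast
      moreover have "\<exists>v\<in>V. c \<le> u v" using v c by auto
      ultimately show "contractible {x\<in>\<Gamma>. c \<le> edge_interp u x}"
        by (rule contractible_edge_interp_superlevel[OF cont])
    qed
  qed
qed

end

theorem lemma2p2:
  fixes \<Gamma> :: "'a::euclidean_space set" and V :: "'a set" and E :: "('a \<times> 'a) set"
    and f :: "'a \<Rightarrow> real" and I :: "'i set" and fs :: "'i \<Rightarrow> 'a \<Rightarrow> real"
  assumes "metric_tree \<Gamma> V E"
    and "continuous_on \<Gamma> f" and "\<forall>x\<in>\<Gamma>. 0 \<le> f x" and "edge_linear E f"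
    and "finite I"
    and "\<forall>\<alpha>\<in>I. unimodal \<Gamma> (fs \<alpha>)"
    and "\<forall>x\<in>\<Gamma>. f x = (\<Sum>\<alpha>\<in>I. fs \<alpha> x)"
  shows "\<exists>gs :: 'i \<Rightarrow> 'a \<Rightarrow> real.
           (\<forall>\<alpha>\<in>I. unimodal \<Gamma> (gs \<alpha>) \<and> edge_linear E (gs \<alpha>)) \<and>
           (\<forall>x\<in>\<Gamma>. f x = (\<Sum>\<alpha>\<in>I. gs \<alpha> x))"
proof -
  interpret finite_metric_tree \<Gamma> V E by unfold_locales (rule assms(1))
  show ?thesis
  proof (intro exI[of _ "\<lambda>\<alpha>. edge_interp (fs \<alpha>)"] conjI ballI)
    fix \<alpha> assume "\<alpha> \<in> I"
    then show "unimodal \<Gamma> (edge_interp (fs \<alpha>))"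
      using assms(6) unimodal_edge_interp by blast
    show "edge_linear E (edge_interp (fs \<alpha>))" by (rule edge_linear_edge_interp)
  next
    fix x assume x: "x \<in> \<Gamma>"
    have "f x = edge_interp f x"
      using edge_interp_eq_if_edge_linear[OF assms(4) x] by simp
    also have "\<dots> = edge_interp (\<lambda>y. \<Sum>\<alpha>\<in>I. fs \<alpha> y) x"
      using assms(7) V_subset x by (intro edge_interp_cong) auto
    also have "\<dots> = (\<Sum>\<alpha>\<in>I. edge_interp (fs \<alpha>) x)"
      by (rule edge_interp_sum)
    finally show "f x = (\<Sum>\<alpha>\<in>I. edge_interp (fs \<alpha>) x)" .
  qed
qed

end
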